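(* (1) For $\chi=0$ or $\chi=e$, the coinvariant algebra $C_\alpha$ of the block $A_\alpha$ (indexed by squares $\alpha\in\mathbb{F}_p$) is $k[c]/(c-\alpha)^2$ if $\alpha$ is a nonzero quadratic residue and $k[c]/(c)$ if $\alpha=0$. (2) For $\chi=ah/2$ with $a\in k^\times$, the coinvariant algebra of $A_\alpha$ (indexed by roots $\alpha$ of $c^p-2c^{(p+1)/2}+c-a^2$) is $k[c]/(c-\alpha)$.
   Context: Let $k$ be an algebraically closed field of characteristic $p>2$, $\mathfrak{sl}_2=\mathfrak{sl}_2(k)$ with standard basis $e,f,h$. $\mathcal{U}_0(\mathfrak{sl}_2)=\mathcal{U}(\mathfrak{sl}_2)/\langle e^p,f^p,h^p-h\rangle$, $\mathcal{U}_e(\mathfrak{sl}_2)=\mathcal{U}(\mathfrak{sl}_2)/\langle e^p,f^p-1,h^p-h\rangle$, $\mathcal{U}_{ah/2}(\mathfrak{sl}_2)=\mathcal{U}(\mathfrak{sl}_2)/\langle e^p,f^p,h^p-h-a\rangle$. $c=(h-1)^2+4ef$ generates the center $\mathcal{U}(\mathfrak{sl}_2)^{\mathrm{SL}_2}=k[c]$. $\mathcal{U}_\chi(\mathfrak{sl}_2)=\bigoplus_\alpha A_\alpha$ is the block decomposition, where $A_\alpha=\pi_\alpha\mathcal{U}_\chi(\mathfrak{sl}_2)$ ($\pi_\alpha$ central idempotents) is the block on whose simple modules $c$ acts by the scalar $\alpha$. The coinvariant algebra $C_\alpha$ is the image of the center of $\mathcal{U}(\mathfrak{sl}_2)$ (equivalently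 of $k[c]$) in $A_\alpha$, presented as a quotient of $k[c]$. *)

theory Defs
  imports "HOL-Computational_Algebra.Polynomial"
begin

definition alg_closed :: "'k::field itself \<Rightarrow> bool" where
  "alg_closed _ \<longleftrightarrow> (\<forall>q::'k poly. degree q > 0 \<longrightarrow> (\<exists>x. poly q x = 0))"

definition k_algebra :: "('k::field \<Rightarrow> 'a::ring_1) \<Rightarrow> bool" where
  "k_algebra sc \<longleftrightarrow> sc 0 = 0 \<and> sc 1 = 1 \<and>
     (\<forall>x y. sc (x + y) = sc x + sc y) \<and> (\<forall>x y. sc (x * y) = sc x * sc y) \<and>
     (\<forall>x y. sc x * y = y * sc x)"

text \<open>Together with the reduced relations (imposed separately) this characterises
  the reduced enveloping algebra U_chi(sl_2) up to isomorphism.\<close>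
definition sl2_pbw_algebra ::
  "nat \<Rightarrow> ('k::field \<Rightarrow> 'a::ring_1) \<Rightarrow> 'a \<Rightarrow> 'a \<Rightarrow> 'a \<Rightarrow> bool" where
  "sl2_pbw_algebra p sc e f h \<longleftrightarrow>
     k_algebra sc \<and>
     h * e - e * h = 2 * e \<and> h * f - f * h = - (2 * f) \<and> e * f - f * e = h \<and>
     (\<forall>cf :: nat \<Rightarrow> nat \<Rightarrow> nat \<Rightarrow> 'k.
        (\<Sum>i<p. \<Sum>j<p. \<Sum>l<p. sc (cf i j l) * (f ^ i * h ^ j * e ^ l)) = 0 \<longrightarrow>
        (\<forall>i<p. \<forall>j<p. \<forall>l<p. cf i j l = 0)) \<and>
     (\<forall>x. \<exists>cf :: nat \<Rightarrow> nat \<Rightarrow> nat \<Rightarrow> 'k.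
        x = (\<Sum>i<p. \<Sum>j<p. \<Sum>l<p. sc (cf i j l) * (f ^ i * h ^ j * e ^ l)))"

definition casimir :: "'a::ring_1 \<Rightarrow> 'a \<Rightarrow> 'a \<Rightarrow> 'a" where
  "casimir e f h = (h - 1)^2 + 4 * e * f"

definition central :: "'a::ring_1 \<Rightarrow> bool" where
  "central z \<longleftrightarrow> (\<forall>x. z * x = x * z)"

text \<open>Primitive central idempotent (= unit of a block).\<close>
definition prim_central_idem :: "'a::ring_1 \<Rightarrow> bool" where
  "prim_central_idem \<pi> \<longleftrightarrow> \<pi> \<noteq> 0 \<and> \<pi> * \<pi> = \<pi> \<and> central \<pi> \<and>
     (\<forall>\<epsilon>. central \<epsilon> \<and> \<epsilon> * \<epsilon> = \<epsilon> \<and> \<epsilon> * \<pi> = \<epsilon> \<longrightarrow> \<epsilon> = 0 \<or> \<epsilon> = \<pi>)"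

definition left_ideal :: "'a::ring_1 set \<Rightarrow> bool" where
  "left_ideal M \<longleftrightarrow> 0 \<in> M \<and> (\<forall>x\<in>M. \<forall>y\<in>M. x + y \<in> M) \<and> (\<forall>r. \<forall>x\<in>M. r * x \<in> M)"

definition max_left_ideal :: "'a::ring_1 set \<Rightarrow> bool" where
  "max_left_ideal M \<longleftrightarrow> left_ideal M \<and> M \<noteq> UNIV \<and>
     (\<forall>N. left_ideal N \<and> M \<subseteq> N \<longrightarrow> N = M \<or> N = UNIV)"

text \<open>Every simple module is A/M for a maximal left ideal M; it belongs to the block
  of \<pi> iff \<pi> acts as the identity on it, i.e. 1 - \<pi> \<in> M; the central element z acts
  on A/M by the scalar \<alpha> iff z - \<alpha> \<in> M.  block_scalar says z acts by \<alpha> on every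
  simple module of the block A_\<pi> = \<pi> A.\<close>
definition block_scalar :: "('k::field \<Rightarrow> 'a::ring_1) \<Rightarrow> 'a \<Rightarrow> 'a \<Rightarrow> 'k \<Rightarrow> bool" where
  "block_scalar sc z \<pi> \<alpha> \<longleftrightarrow>
     (\<forall>M. max_left_ideal M \<and> 1 - \<pi> \<in> M \<longrightarrow> z - sc \<alpha> \<in> M)"

definition peval :: "('k::field \<Rightarrow> 'a::ring_1) \<Rightarrow> 'k poly \<Rightarrow> 'a \<Rightarrow> 'a" where
  "peval sc q x = (\<Sum>i\<le>degree q. sc (coeff q i) * x ^ i)"

text \<open>Kernel of k[c] \<rightarrow> A_\<pi>, q \<mapsto> \<pi> q(c); the coinvariant algebra is k[c] modulo this.\<close>
definition coinv_kernel :: "('k::field \<Rightarrow> 'a::ring_1) \<Rightarrow> 'a \<Rightarrow> 'a \<Rightarrow> 'k poly set" where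
  "coinv_kernel sc z \<pi> = {q. \<pi> * peval sc q z = 0}"

end

theory Submission
  imports Defs "HOL-Number_Theory.Cong"
begin

text \<open>Every simple module \<open>A/M\<close> of \<open>A = U\<^sub>\<chi>(sl\<^sub>2)\<close> contains a highest weight vector, of some
  weight \<open>r\<close> with \<open>r\<^sup>p - r = a\<close>, on which \<open>c\<close> acts by \<open>(r + 1)\<^sup>2\<close>. Decomposing \<open>1\<close> into the
  weight projections of \<open>h\<close> and using \<open>e\<^sup>p = 0\<close> shows that \<open>c\<close> is annihilated by
  \<open>\<Prod>(X - s\<^sup>2)\<close>, \<open>s\<close> running over the roots of \<open>X\<^sup>p - X - a\<close>. A Bezout argument in \<open>k[X]\<close> then
  shows that the block idempotent \<open>\<pi>\<close> kills \<open>(c - \<alpha>)\<^sup>n\<close>, where \<open>n\<close> is the multiplicity of \<open>\<alpha>\<close>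
  among the \<open>s\<^sup>2\<close>: \<open>n \<le> 2\<close>, and \<open>n \<le> 1\<close> unless \<open>a = 0\<close> and \<open>\<alpha> \<noteq> 0\<close>. In that remaining case a
  baby Verma module in the block shows \<open>\<pi> (c - \<alpha>) \<noteq> 0\<close>. The least power of \<open>c - \<alpha>\<close> killed by
  \<open>\<pi>\<close> then generates the kernel of \<open>k[c] \<rightarrow> \<pi> A\<close>.\<close>

section \<open>Polynomials evaluated in a \<open>k\<close>-algebra\<close>

locale k_alg =
  fixes sc :: "'k::field \<Rightarrow> 'a::ring_1"
  assumes k_algebra: "k_algebra sc"
begin

lemma sc_0 [simp]: "sc 0 = 0"
  and sc_1 [simp]: "sc 1 = 1"
  and sc_add: "sc (x + y) = sc x + sc y"
  and sc_mult: "sc (x * y) = sc x * sc y"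
  and sc_commute: "sc x * z = z * sc x"
  using k_algebra unfolding k_algebra_def by blast+

lemma sc_minus: "sc (- x) = - sc x"
  using sc_add[of "- x" x] by (simp add: eq_neg_iff_add_eq_0)

lemma sc_diff: "sc (x - y) = sc x - sc y"
  using sc_add[of x "- y"] by (simp add: sc_minus)

lemma sc_of_nat [simp]: "sc (of_nat n) = of_nat n"
  by (induction n) (simp_all add: sc_add)

lemma sc_numeral [simp]: "sc (numeral n) = numeral n"
  using sc_of_nat[of "numeral n"] by simp

lemma sc_sum: "sc (sum g A) = (\<Sum>i\<in>A. sc (g i))"
  by (induction A rule: infinite_finite_induct) (simp_all add: sc_add)

lemma sc_left_commute: "y * (sc x * z) = sc x * (y * z)"
  by (metis sc_commute mult.assoc)

lemma sc_sc_mult: "sc c * (sc d * x) = sc (c * d) * x"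
  by (simp add: sc_mult mult.assoc)

lemma sc_inverse_cancel: "x \<noteq> 0 \<Longrightarrow> sc (inverse x) * (sc x * y) = y"
  by (simp add: sc_sc_mult)

lemma sc_mult_eq_0_iff [simp]: "sc x * y = 0 \<longleftrightarrow> x = 0 \<or> y = 0"
proof
  assume "sc x * y = 0"
  moreover have "x \<noteq> 0 \<Longrightarrow> y = sc (inverse x) * (sc x * y)"
    by (rule sym, rule sc_inverse_cancel)
  ultimately show "x = 0 \<or> y = 0" by auto
qed auto

lemma sum_sc_delta:
  assumes "finite A" "m \<in> A"
  shows "(\<Sum>l\<in>A. sc (if l = m then c else 0) * B l) = sc c * B m"
proof -
  have "(\<Sum>l\<in>A. sc (if l = m then c else 0) * B l) = (\<Sum>l\<in>A. if l = m then sc c * B l else 0)"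
    by (rule sum.cong) auto
  then show ?thesis using assms by simp
qed

lemma peval_eq_sum_lessThan:
  assumes "degree q < n"
  shows "peval sc q x = (\<Sum>i<n. sc (coeff q i) * x ^ i)"
  unfolding peval_def
  by (rule sum.mono_neutral_left) (use assms in \<open>auto simp: coeff_eq_0\<close>)

lemma peval_pCons: "peval sc (pCons c q) x = sc c + x * peval sc q x"
proof -
  let ?N = "Suc (degree q)"
  have "peval sc (pCons c q) x = (\<Sum>i<Suc ?N. sc (coeff (pCons c q) i) * x ^ i)"
    using degree_pCons_le[of c q] by (intro peval_eq_sum_lessThan) simp
  also have "\<dots> = sc c + (\<Sum>i<?N. sc (coeff q i) * x ^ Suc i)"
    by (subst sum.lessThan_Suc_shift) simp
  also have "(\<Sum>i<?N. sc (coeff q i) * x ^ Suc i) = x * (\<Sum>i<?N. sc (coeff q i) * x ^ i)"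
    by (simp only: sum_distrib_left sc_left_commute power_Suc)
  also have "(\<Sum>i<?N. sc (coeff q i) * x ^ i) = peval sc q x"
    by (rule peval_eq_sum_lessThan[symmetric]) simp
  finally show ?thesis .
qed

lemma peval_0 [simp]: "peval sc 0 x = 0"
  by (simp add: peval_def)

lemma peval_const [simp]: "peval sc [:c:] x = sc c"
  using peval_pCons[of c 0 x] by simp

lemma peval_one [simp]: "peval sc 1 x = 1"
  using peval_const[of 1 x] by (simp add: one_pCons)

lemma peval_linear [simp]: "peval sc [:c, 1:] x = sc c + x"
  by (simp add: peval_pCons)

lemma peval_add: "peval sc (q1 + q2) x = peval sc q1 x + peval sc q2 x"
proof (induction q1 arbitrary: q2)
  case (pCons c q)
  then show ?case
    by (cases q2 rule: pCons_cases) (simp add: peval_pCons sc_add algebra_simps)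
qed simp

lemma peval_smult: "peval sc (smult c q) x = sc c * peval sc q x"
  by (induction q) (simp_all add: peval_pCons sc_mult distrib_left sc_left_commute mult.assoc)

lemma peval_minus: "peval sc (- q) x = - peval sc q x"
  using peval_add[of "- q" q x] by (simp add: eq_neg_iff_add_eq_0)

lemma peval_diff: "peval sc (q1 - q2) x = peval sc q1 x - peval sc q2 x"
  using peval_add[of q1 "- q2" x] by (simp add: peval_minus)

lemma peval_mult: "peval sc (q1 * q2) x = peval sc q1 x * peval sc q2 x"
  by (induction q1) (simp_all add: peval_add peval_smult peval_pCons distrib_right mult.assoc)

lemma peval_power: "peval sc (q ^ n) x = peval sc q x ^ n"
  by (induction n) (simp_all add: peval_mult)

lemma peval_monom: "peval sc (monom c n) x = sc c * x ^ n"
  by (simp add: monom_altdef peval_smult peval_power)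

lemma peval_sum: "peval sc (sum g A) x = (\<Sum>i\<in>A. peval sc (g i) x)"
  by (induction A rule: infinite_finite_induct) (simp_all add: peval_add)

lemma peval_pcompose: "peval sc (pcompose q r) x = peval sc q (peval sc r x)"
  by (induction q) (simp_all add: pcompose_pCons peval_add peval_mult peval_pCons)

lemma peval_linear_factor: "peval sc (q * [:- \<alpha>, 1:]) x = peval sc q x * (x - sc \<alpha>)"
  by (simp only: peval_mult peval_linear sc_minus) (simp add: algebra_simps)

lemma peval_intertwine:
  assumes "y * x = z * y"
  shows "y * peval sc q x = peval sc q z * y"
proof (induction q)
  case (pCons c q)
  have "y * (x * peval sc q x) = z * (peval sc q z * y)"
    by (simp add: mult.assoc[symmetric] assms) (simp add: mult.assoc pCons)
  then show ?case
    by (simp add: peval_pCons distrib_left distrib_right sc_commute mult.assoc)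
qed simp

lemma power_shift_commute:
  assumes "y * x = (x - sc c) * y"
  shows "y ^ n * x = (x - sc (of_nat n * c)) * y ^ n"
proof (induction n)
  case (Suc n)
  have "y ^ Suc n * x = y ^ n * ((x - sc c) * y)"
    by (simp only: power_Suc2 mult.assoc assms)
  also have "\<dots> = (y ^ n * x) * y - sc c * (y ^ n * y)"
    by (simp add: left_diff_distrib right_diff_distrib mult.assoc sc_left_commute)
  also have "\<dots> = (x - sc (of_nat n * c)) * (y ^ n * y) - sc c * (y ^ n * y)"
    by (simp only: Suc.IH mult.assoc)
  also have "\<dots> = (x - sc (of_nat (Suc n) * c)) * y ^ Suc n"
    by (simp only: power_Suc2) (simp add: algebra_simps sc_add)
  finally show ?case .
qed simp

lemma weight_vector_shift:
  assumes "y * x = (x - sc c) * y" "x * v = sc r * v"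
  shows "x * (y ^ n * v) = sc (r + of_nat n * c) * (y ^ n * v)"
proof -
  have "y ^ n * (sc r * v) = (x - sc (of_nat n * c)) * (y ^ n * v)"
    using power_shift_commute[OF assms(1), of n] assms(2) by (metis mult.assoc)
  then show ?thesis by (simp add: algebra_simps sc_left_commute sc_add)
qed

lemma central_peval: "central z \<Longrightarrow> central (peval sc q z)"
  unfolding central_def using peval_intertwine by metis

end

section \<open>Left ideals and central idempotents\<close>

lemma central_mult: "central x \<Longrightarrow> central y \<Longrightarrow> central (x * y)"
  unfolding central_def by (metis mult.assoc)

lemma prim_central_idem_mult_idem:
  assumes \<pi>: "prim_central_idem \<pi>" and \<epsilon>: "central \<epsilon>" "\<epsilon> * \<epsilon> = \<epsilon>"
  shows "\<pi> * \<epsilon> = 0 \<or> \<pi> * \<epsilon> = \<pi>"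
proof -
  have \<pi>_idem: "\<pi> * \<pi> = \<pi>" "central \<pi>"
    and prim: "\<And>\<delta>. central \<delta> \<and> \<delta> * \<delta> = \<delta> \<and> \<delta> * \<pi> = \<delta> \<longrightarrow> \<delta> = 0 \<or> \<delta> = \<pi>"
    using \<pi> unfolding prim_central_idem_def by auto
  have comm: "\<epsilon> * \<pi> = \<pi> * \<epsilon>" using \<epsilon>(1) by (simp add: central_def)
  have "(\<pi> * \<epsilon>) * (\<pi> * \<epsilon>) = \<pi> * \<epsilon>" by (metis mult.assoc comm \<pi>_idem(1) \<epsilon>(2))
  moreover have "(\<pi> * \<epsilon>) * \<pi> = \<pi> * \<epsilon>" by (metis mult.assoc comm \<pi>_idem(1))
  ultimately show ?thesis using prim central_mult[OF \<pi>_idem(2) \<epsilon>(1)] by blast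
qed

lemma left_ideal_0: "left_ideal M \<Longrightarrow> 0 \<in> M"
  and left_ideal_add: "left_ideal M \<Longrightarrow> x \<in> M \<Longrightarrow> y \<in> M \<Longrightarrow> x + y \<in> M"
  and left_ideal_mult: "left_ideal M \<Longrightarrow> x \<in> M \<Longrightarrow> r * x \<in> M"
  by (simp_all add: left_ideal_def)

lemma left_ideal_minus: "left_ideal M \<Longrightarrow> x \<in> M \<Longrightarrow> - x \<in> M"
  using left_ideal_mult[of M x "- 1"] by simp

lemma left_ideal_diff: "left_ideal M \<Longrightarrow> x \<in> M \<Longrightarrow> y \<in> M \<Longrightarrow> x - y \<in> M"
  using left_ideal_add[of M x "- y"] left_ideal_minus[of M y] by simp

lemma left_ideal_sum: "left_ideal M \<Longrightarrow> (\<And>i. i \<in> A \<Longrightarrow> g i \<in> M) \<Longrightarrow> sum g A \<in> M"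
  by (induction A rule: infinite_finite_induct) (auto simp: left_ideal_0 left_ideal_add)

lemma left_ideal_one_iff: "left_ideal M \<Longrightarrow> 1 \<in> M \<longleftrightarrow> M = UNIV"
  using left_ideal_mult[of M 1] by (metis UNIV_I UNIV_eq_I mult_1_right)

lemma left_ideal_range_mult_right: "left_ideal (range (\<lambda>x. x * y))"
  unfolding left_ideal_def
proof (intro conjI ballI allI)
  show "0 \<in> range (\<lambda>x. x * y)" by (rule range_eqI[of _ _ 0]) simp
next
  fix a b assume "a \<in> range (\<lambda>x. x * y)" "b \<in> range (\<lambda>x. x * y)"
  then obtain a' b' where "a = a' * y" "b = b' * y" by blast
  then show "a + b \<in> range (\<lambda>x. x * y)"
    by (intro range_eqI[of _ _ "a' + b'"]) (simp add: distrib_right)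
next
  fix r a assume "a \<in> range (\<lambda>x. x * y)"
  then obtain a' where "a = a' * y" by blast
  then show "r * a \<in> range (\<lambda>x. x * y)"
    by (intro range_eqI[of _ _ "r * a'"]) (simp add: mult.assoc)
qed

lemma max_left_ideal_imp_left_ideal: "max_left_ideal M \<Longrightarrow> left_ideal M"
  and max_left_ideal_one: "max_left_ideal M \<Longrightarrow> 1 \<notin> M"
  using left_ideal_one_iff by (auto simp: max_left_ideal_def)

lemma left_ideal_Union_chain:
  assumes "C \<noteq> {}" "subset.chain {N. left_ideal N} C"
  shows "left_ideal (\<Union>C)"
  unfolding left_ideal_def
proof (intro conjI ballI allI)
  have ideals: "\<And>N. N \<in> C \<Longrightarrow> left_ideal N"
    using assms(2) by (auto simp: subset.chain_def)
  then show "0 \<in> \<Union>C"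
    using assms(1) left_ideal_0 by blast
  show "r * x \<in> \<Union>C" if "x \<in> \<Union>C" for r x
    using that ideals left_ideal_mult by blast
  fix x y assume "x \<in> \<Union>C" "y \<in> \<Union>C"
  then obtain N1 N2 where N: "N1 \<in> C" "N2 \<in> C" "x \<in> N1" "y \<in> N2" by blast
  then have "N1 \<subseteq> N2 \<or> N2 \<subseteq> N1"
    using assms(2) by (auto simp: subset.chain_def)
  then show "x + y \<in> \<Union>C"
    using N ideals left_ideal_add by blast
qed

lemma exists_max_left_ideal:
  fixes I :: "'a::ring_1 set"
  assumes "left_ideal I" "1 \<notin> I"
  obtains M where "max_left_ideal M" "I \<subseteq> M"
proof -
  define A where "A = {N. left_ideal N \<and> 1 \<notin> N \<and> I \<subseteq> N}"
  have "\<exists>M\<in>A. \<forall>X\<in>A. M \<subseteq> X \<longrightarrow> X = M"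
  proof (rule subset_Zorn_nonempty)
    show "A \<noteq> {}" using assms by (auto simp: A_def)
    fix C assume C: "C \<noteq> {}" "subset.chain A C"
    then have CA: "C \<subseteq> A" and "subset.chain {N. left_ideal N} C"
      by (auto simp: subset.chain_def A_def)
    with C(1) have "left_ideal (\<Union>C)" by (intro left_ideal_Union_chain)
    with C(1) CA show "\<Union>C \<in> A" by (auto simp: A_def)
  qed
  then obtain M where M: "M \<in> A" "\<And>X. X \<in> A \<Longrightarrow> M \<subseteq> X \<Longrightarrow> X = M" by blast
  have "max_left_ideal M"
    unfolding max_left_ideal_def
  proof (intro conjI allI impI)
    show "left_ideal M" "M \<noteq> UNIV" using M(1) by (auto simp: A_def)
    fix N assume N: "left_ideal N \<and> M \<subseteq> N"
    show "N = M \<or> N = UNIV"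
      using M N left_ideal_one_iff[of N] by (auto simp: A_def)
  qed
  with M(1) show ?thesis using that by (auto simp: A_def)
qed

lemma exists_block_max_left_ideal:
  assumes "prim_central_idem \<pi>"
  obtains M where "max_left_ideal M" "1 - \<pi> \<in> M"
proof (rule exists_max_left_ideal)
  let ?I = "range (\<lambda>x. x * (1 - \<pi>))"
  show "left_ideal ?I" by (rule left_ideal_range_mult_right)
  have "\<pi> \<noteq> 0" "\<pi> * \<pi> = \<pi>" using assms by (auto simp: prim_central_idem_def)
  then show "1 \<notin> ?I"
  proof (clarify)
    fix x assume "1 = x * (1 - \<pi>)"
    then have "\<pi> = x * (\<pi> - \<pi> * \<pi>)"
      by (metis mult.assoc mult_1_left left_diff_distrib)
    with \<open>\<pi> * \<pi> = \<pi>\<close> \<open>\<pi> \<noteq> 0\<close> show False by simp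
  qed
  show "max_left_ideal M \<Longrightarrow> ?I \<subseteq> M \<Longrightarrow> thesis" for M
    using that by (auto intro: range_eqI[of _ _ 1])
qed

section \<open>Artin--Schreier roots and linear factors\<close>

lemma of_nat_power_CHAR:
  assumes "prime CHAR('k::field)"
  shows "(of_nat n :: 'k) ^ CHAR('k) = of_nat n"
proof (induction n)
  case 0
  show ?case using prime_gt_0_nat[OF assms] by simp
next
  case (Suc n)
  then show ?case using freshmans_dream[OF assms refl, of 1 "of_nat n"] by simp
qed

lemma of_nat_eq_iff_less_CHAR:
  assumes "i < CHAR('k::field)" "j < CHAR('k)"
  shows "(of_nat i :: 'k) = of_nat j \<longleftrightarrow> i = j"
  using assms of_nat_eq_iff_cong_CHAR[of i j] cong_less_modulus_unique_nat by auto

lemma artin_schreier_roots_finite: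
  fixes a :: "'k::field"
  assumes "n > 1"
  shows "finite {s. s ^ n - s = a}" and "card {s. s ^ n - s = a} \<le> n"
proof -
  define P :: "'k poly" where "P = monom 1 n + [:- a, - 1:]"
  have "degree P = n"
    unfolding P_def using assms by (subst degree_add_eq_left) (auto simp: degree_monom_eq)
  then have "P \<noteq> 0" using assms by auto
  have roots: "{s. s ^ n - s = a} = {s. poly P s = 0}"
    by (auto simp: P_def poly_monom algebra_simps)
  show "finite {s. s ^ n - s = a}"
    unfolding roots using poly_roots_finite[OF \<open>P \<noteq> 0\<close>] .
  show "card {s. s ^ n - s = a} \<le> n"
    unfolding roots using card_poly_roots_bound[OF \<open>P \<noteq> 0\<close>] \<open>degree P = n\<close> by simp
qed

lemma artin_schreier_roots_bij:
  fixes r a :: "'k::field"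
  assumes p: "prime CHAR('k)" and k: "(of_nat k :: 'k) \<noteq> 0" and r: "r ^ CHAR('k) - r = a"
  shows "bij_betw (\<lambda>n. r + of_nat (k * n)) {..<CHAR('k)} {s. s ^ CHAR('k) - s = a}"
proof -
  let ?p = "CHAR('k)" and ?g = "\<lambda>n. r + of_nat (k * n) :: 'k"
  have inj: "inj_on ?g {..<?p}"
    using k by (intro inj_onI) (auto simp: of_nat_eq_iff_less_CHAR)
  have "?g ` {..<?p} \<subseteq> {s. s ^ ?p - s = a}"
    using r by (auto simp: freshmans_dream[OF p refl] of_nat_power_CHAR[OF p] simp del: of_nat_mult)
  moreover have "card {s. s ^ ?p - s = a} \<le> card (?g ` {..<?p})"
    using artin_schreier_roots_finite(2)[of ?p a] prime_gt_1_nat[OF p] card_image[OF inj] by simp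
  ultimately have "?g ` {..<?p} = {s. s ^ ?p - s = a}"
    using artin_schreier_roots_finite(1)[of ?p a] prime_gt_1_nat[OF p]
    by (intro card_seteq) auto
  with inj show ?thesis by (simp add: bij_betw_def)
qed

lemma artin_schreier_square:
  fixes s a :: "'a::comm_ring_1"
  assumes "odd n" "s ^ n - s = a"
  shows "(s ^ 2) ^ n - 2 * (s ^ 2) ^ ((n + 1) div 2) + s ^ 2 - a ^ 2 = 0"
proof -
  obtain k where n: "n = Suc (2 * k)" using assms(1) oddE by fastforce
  have "(n + 1) div 2 = Suc k" "2 * Suc k = Suc n" unfolding n by simp_all
  then have "(s ^ 2) ^ ((n + 1) div 2) = s ^ Suc n" by (simp only: power_mult[symmetric])
  also have "\<dots> = s ^ n * s" by (rule power_Suc2)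
  moreover have "(s ^ 2) ^ n = (s ^ n) ^ 2" by (simp add: power_mult[symmetric] mult.commute)
  ultimately have "(s ^ 2) ^ n - 2 * (s ^ 2) ^ ((n + 1) div 2) + s ^ 2 = (s ^ n - s) ^ 2"
    by (simp add: power2_eq_square algebra_simps)
  with assms(2) show ?thesis by simp
qed

lemma poly_div_linear_at_root:
  fixes P :: "'k::field poly"
  assumes "poly P s = 0" "poly P x = 0"
  shows "poly (P div [:- s, 1:]) x = (if s = x then poly (pderiv P) x else 0)"
proof -
  have factor: "P = [:- s, 1:] * (P div [:- s, 1:])"
    using assms(1) by (simp add: poly_eq_0_iff_dvd del: mult_pCons_left)
  show ?thesis
  proof (cases "s = x")
    case True
    have "pderiv ([:- s, 1:] * (P div [:- s, 1:]))
        = [:- s, 1:] * pderiv (P div [:- s, 1:]) + P div [:- s, 1:]"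
      by (simp only: pderiv_mult) (simp add: pderiv_pCons del: mult_pCons_left)
    then show ?thesis using True factor by simp
  next
    case False
    have "0 = poly ([:- s, 1:] * (P div [:- s, 1:])) x"
      using assms(2) factor by simp
    then have "0 = (x - s) * poly (P div [:- s, 1:]) x" by auto
    then show ?thesis using False by simp
  qed
qed

lemma sum_div_linear_factors_eq_pderiv:
  fixes P :: "'k::field poly"
  assumes A: "finite A" "card A = degree P" and roots: "\<And>s. s \<in> A \<Longrightarrow> poly P s = 0"
  shows "(\<Sum>s\<in>A. P div [:- s, 1:]) = pderiv P"
proof (cases "A = {}")
  case True
  then have "degree P = 0" using A by simp
  then show ?thesis using True by (auto elim: degree_eq_zeroE simp: pderiv_pCons)
next
  case False
  then have "P \<noteq> 0" using A by auto
  show ?thesis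
  proof (rule poly_eqI_degree[of A])
    show "poly (\<Sum>s\<in>A. P div [:- s, 1:]) x = poly (pderiv P) x" if "x \<in> A" for x
      using that A(1) roots by (simp add: poly_sum poly_div_linear_at_root)
    have "degree (P div [:- s, 1:]) < card A" if "s \<in> A" for s
    proof -
      have factor: "P = [:- s, 1:] * (P div [:- s, 1:])"
        using roots[OF that] by (simp add: poly_eq_0_iff_dvd del: mult_pCons_left)
      then have "P div [:- s, 1:] \<noteq> 0" using \<open>P \<noteq> 0\<close> by auto
      then have "degree P = 1 + degree (P div [:- s, 1:])"
        by (subst factor) (simp add: degree_mult_eq del: mult_pCons_left)
      then show ?thesis using A(2) by simp
    qed
    then show "degree (\<Sum>s\<in>A. P div [:- s, 1:]) < card A"
      using False A(1) by (intro degree_sum_less) auto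
    have "degree (pderiv P) \<le> degree P - 1"
      by (rule degree_le) (auto simp: coeff_pderiv coeff_eq_0)
    moreover have "card A > 0" using A(1) False by (simp add: card_gt_0_iff)
    ultimately show "degree (pderiv P) < card A" using A(2) by linarith
  qed
qed

lemma prod_linear_factors_split:
  fixes g :: "'b \<Rightarrow> 'k::field"
  assumes "finite A"
  shows "(\<Prod>s\<in>A. [:- g s, 1:])
      = [:- \<alpha>, 1:] ^ card {s\<in>A. g s = \<alpha>} * (\<Prod>s\<in>{s\<in>A. g s \<noteq> \<alpha>}. [:- g s, 1:])"
    and "poly (\<Prod>s\<in>{s\<in>A. g s \<noteq> \<alpha>}. [:- g s, 1:]) \<alpha> \<noteq> 0"
proof -
  have "A = {s\<in>A. g s = \<alpha>} \<union> {s\<in>A. g s \<noteq> \<alpha>}" by blast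
  then have "(\<Prod>s\<in>A. [:- g s, 1:])
      = (\<Prod>s\<in>{s\<in>A. g s = \<alpha>}. [:- g s, 1:]) * (\<Prod>s\<in>{s\<in>A. g s \<noteq> \<alpha>}. [:- g s, 1:])"
    using assms by (metis (no_types, lifting) prod.union_disjoint disjoint_iff finite_Un mem_Collect_eq)
  also have "(\<Prod>s\<in>{s\<in>A. g s = \<alpha>}. [:- g s, 1:]) = (\<Prod>s\<in>{s\<in>A. g s = \<alpha>}. [:- \<alpha>, 1:])"
    by (rule prod.cong) auto
  also have "\<dots> = [:- \<alpha>, 1:] ^ card {s\<in>A. g s = \<alpha>}" by simp
  finally show "(\<Prod>s\<in>A. [:- g s, 1:])
      = [:- \<alpha>, 1:] ^ card {s\<in>A. g s = \<alpha>} * (\<Prod>s\<in>{s\<in>A. g s \<noteq> \<alpha>}. [:- g s, 1:])" .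
  show "poly (\<Prod>s\<in>{s\<in>A. g s \<noteq> \<alpha>}. [:- g s, 1:]) \<alpha> \<noteq> 0"
    using assms by (auto simp: poly_prod)
qed

lemma bezout_linear_power:
  fixes S :: "'k::field poly"
  assumes "poly S \<alpha> \<noteq> 0"
  obtains u v where "u * [:- \<alpha>, 1:] ^ k + v * S = 1"
proof -
  let ?c = "poly S \<alpha>"
  have "[:- \<alpha>, 1:] dvd S - [:?c:]" by (simp add: poly_eq_0_iff_dvd[symmetric])
  then obtain r where r: "S - [:?c:] = r * [:- \<alpha>, 1:]" by (metis dvdE mult.commute)
  define y where "y = smult (- inverse ?c) r * [:- \<alpha>, 1:]"
  have S: "S = [:?c:] + r * [:- \<alpha>, 1:]" using r by (metis add.commute diff_add_cancel)
  have "smult (inverse ?c) S = smult (inverse ?c) [:?c:] + smult (inverse ?c) (r * [:- \<alpha>, 1:])"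
    by (subst S) (rule smult_add_right)
  also have "smult (inverse ?c) [:?c:] = 1" using assms by (simp add: one_pCons)
  also have "smult (inverse ?c) (r * [:- \<alpha>, 1:]) = - y"
    by (simp only: y_def mult_smult_left smult_minus_left mult_minus_left minus_minus)
  finally have "1 - y = smult (inverse ?c) S" by simp
  then have "1 - y ^ k = smult (inverse ?c) (\<Sum>i<k. y ^ i) * S"
    by (simp add: one_diff_power_eq mult_smult_left mult.commute)
  moreover have "y ^ k = smult (- inverse ?c) r ^ k * [:- \<alpha>, 1:] ^ k"
    unfolding y_def by (rule power_mult_distrib)
  ultimately have "smult (- inverse ?c) r ^ k * [:- \<alpha>, 1:] ^ k + smult (inverse ?c) (\<Sum>i<k. y ^ i) * S = 1"
    by (metis diff_add_cancel add.commute)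
  then show ?thesis using that by blast
qed

section \<open>Blocks and the coinvariant algebra\<close>

context k_alg
begin

lemma left_ideal_sc_cancel: "left_ideal M \<Longrightarrow> c \<noteq> 0 \<Longrightarrow> sc c * y \<in> M \<Longrightarrow> y \<in> M"
  using left_ideal_mult[of M "sc c * y" "sc (inverse c)"] by (simp add: sc_inverse_cancel)

lemma peval_minus_eval_mem:
  assumes "left_ideal M" "z - sc \<alpha> \<in> M"
  shows "peval sc q z - sc (poly q \<alpha>) \<in> M"
proof -
  have "[:- \<alpha>, 1:] dvd q - [:poly q \<alpha>:]"
    by (simp add: poly_eq_0_iff_dvd[symmetric])
  then obtain r where "q - [:poly q \<alpha>:] = r * [:- \<alpha>, 1:]"
    by (metis dvdE mult.commute)
  then have "peval sc q z - sc (poly q \<alpha>) = peval sc r z * (z - sc \<alpha>)"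
    by (metis peval_diff peval_const peval_linear_factor)
  then show ?thesis using assms left_ideal_mult by metis
qed

lemma block_eval_root:
  assumes M: "left_ideal M" "1 \<notin> M" "1 - \<pi> \<in> M" "z - sc \<alpha> \<in> M"
    and q: "\<pi> * peval sc q z = 0"
  shows "poly q \<alpha> = 0"
proof (rule ccontr)
  let ?c = "poly q \<alpha>"
  assume "?c \<noteq> 0"
  have "sc ?c * 1 = sc ?c * (1 - \<pi>) - \<pi> * (peval sc q z - sc ?c)"
    using q by (simp add: algebra_simps sc_commute[of _ \<pi>])
  also have "\<dots> \<in> M"
    using M peval_minus_eval_mem left_ideal_mult left_ideal_diff by metis
  finally show False
    using M left_ideal_sc_cancel \<open>?c \<noteq> 0\<close> by blast
qed

lemma prim_central_idem_annihilates_power: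
  assumes z: "central z" and \<pi>: "prim_central_idem \<pi>"
    and M: "left_ideal M" "1 \<notin> M" "1 - \<pi> \<in> M" "z - sc \<alpha> \<in> M"
    and R: "peval sc R z = 0" "R = [:- \<alpha>, 1:] ^ k * S" "poly S \<alpha> \<noteq> 0"
  shows "\<pi> * peval sc ([:- \<alpha>, 1:] ^ k) z = 0"
proof -
  have "poly R \<alpha> = 0" using block_eval_root[OF M] R(1) by simp
  then have "k > 0" using R(2,3) by (cases k) auto
  obtain u v where uv: "u * [:- \<alpha>, 1:] ^ k + v * S = 1"
    using bezout_linear_power[OF R(3)] by blast
  text \<open>\<open>v S\<close> is an idempotent of \<open>k[X]/(R)\<close>, so evaluating it at \<open>z\<close> splits off a central idempotent.\<close>
  define \<epsilon> where "\<epsilon> = peval sc (v * S) z"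
  have vS: "v * S = 1 - u * [:- \<alpha>, 1:] ^ k" using uv by (metis add_diff_cancel_left')
  have "(v * S) * (v * S) = v * S - (u * v) * R"
    unfolding R(2) by (subst (2) vS) (simp add: algebra_simps)
  then have \<epsilon>_idem: "\<epsilon> * \<epsilon> = \<epsilon>"
    unfolding \<epsilon>_def peval_mult[symmetric] by (simp add: peval_diff peval_mult R(1))
  have "central \<epsilon>" unfolding \<epsilon>_def by (rule central_peval[OF z])
  from prim_central_idem_mult_idem[OF \<pi> this \<epsilon>_idem] show ?thesis
  proof
    assume "\<pi> * \<epsilon> = 0"
    then have "poly (v * S) \<alpha> = 0" using block_eval_root[OF M] unfolding \<epsilon>_def by blast
    moreover have "poly (u * [:- \<alpha>, 1:] ^ k + v * S) \<alpha> = 1" using uv by simp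
    ultimately show ?thesis using \<open>k > 0\<close> by (auto simp: power_0_left)
  next
    assume \<pi>\<epsilon>: "\<pi> * \<epsilon> = \<pi>"
    have "peval sc (v * R) z = peval sc (v * S * [:- \<alpha>, 1:] ^ k) z"
      unfolding R(2) by (simp only: ac_simps)
    then have "\<pi> * peval sc (v * R) z = \<pi> * \<epsilon> * peval sc ([:- \<alpha>, 1:] ^ k) z"
      by (simp only: \<epsilon>_def peval_mult mult.assoc)
    then show ?thesis using \<pi>\<epsilon> R(1) by (simp add: peval_mult)
  qed
qed

lemma coinv_kernel_eq_dvd_power:
  assumes z: "central z"
    and kill: "\<pi> * peval sc ([:- \<alpha>, 1:] ^ Suc k) z = 0"
    and minimal: "\<pi> * peval sc ([:- \<alpha>, 1:] ^ k) z \<noteq> 0"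
  shows "coinv_kernel sc z \<pi> = {q. [:- \<alpha>, 1:] ^ Suc k dvd q}"
proof (intro set_eqI iffI)
  fix q assume "q \<in> {q. [:- \<alpha>, 1:] ^ Suc k dvd q}"
  then obtain r where "q = [:- \<alpha>, 1:] ^ Suc k * r" by (auto elim: dvdE)
  then show "q \<in> coinv_kernel sc z \<pi>"
    using kill by (simp add: coinv_kernel_def peval_mult mult.assoc[symmetric])
next
  fix q assume "q \<in> coinv_kernel sc z \<pi>"
  then have q: "\<pi> * peval sc q z = 0" by (simp add: coinv_kernel_def)
  show "q \<in> {q. [:- \<alpha>, 1:] ^ Suc k dvd q}"
  proof (rule ccontr)
    let ?X = "[:- \<alpha>, 1:]"
    define j where "j = order \<alpha> q"
    assume "q \<notin> {q. ?X ^ Suc k dvd q}"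
    then have "q \<noteq> 0" "j \<le> k" using order_divides[of \<alpha> "Suc k" q] by (auto simp: j_def)
    then obtain S where S: "q = ?X ^ j * S" "\<not> ?X dvd S" using order_decomp j_def by blast
    then have "poly S \<alpha> \<noteq> 0" by (simp add: poly_eq_0_iff_dvd)
    then obtain u v where uv: "u * ?X ^ Suc k + v * S = 1" by (rule bezout_linear_power)
    define w where "w = u * ?X ^ j"
    have "?X ^ j = ?X ^ j * (u * ?X ^ Suc k + v * S)" by (simp only: uv mult_1_right)
    also have "\<dots> = w * ?X ^ Suc k + v * q" unfolding w_def S(1) by (simp only: distrib_left ac_simps)
    finally have "\<pi> * peval sc (?X ^ j) z
        = \<pi> * (peval sc w z * peval sc (?X ^ Suc k) z + peval sc v z * peval sc q z)"
      by (simp only: peval_add peval_mult)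
    also have "\<dots> = peval sc w z * (\<pi> * peval sc (?X ^ Suc k) z) + peval sc v z * (\<pi> * peval sc q z)"
    proof -
      have "\<pi> * peval sc w z = peval sc w z * \<pi>" "\<pi> * peval sc v z = peval sc v z * \<pi>"
        using central_peval[OF z] by (simp_all add: central_def)
      then show ?thesis by (simp add: distrib_left mult.assoc[symmetric])
    qed
    also have "\<dots> = 0" using kill q by simp
    finally have "\<pi> * peval sc (?X ^ j * ?X ^ (k - j)) z = 0"
      by (simp only: peval_mult mult.assoc[symmetric]) simp
    with \<open>j \<le> k\<close> minimal show False by (simp flip: power_add)
  qed
qed

end

section \<open>The reduced enveloping algebra of \<open>sl\<^sub>2\<close>\<close>

lemma mult_4: "4 * x = x + x + x + x" for x :: "'a::ring_1"
proof -
  have "(4::'a) = 1 + 1 + 1 + 1" by simp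
  then show ?thesis by (simp only: distrib_right mult_1_left)
qed

locale sl2_reduced = k_alg sc for sc :: "'k::field \<Rightarrow> 'a::ring_1" +
  fixes p :: nat and e f h :: 'a and a :: 'k
  assumes prime_p: "prime p" and p_gt_2: "p > 2" and CHAR_eq: "CHAR('k) = p"
    and k_alg_closed: "alg_closed TYPE('k)"
    and pbw: "sl2_pbw_algebra p sc e f h"
    and e_power_p: "e ^ p = 0" and h_power_p: "h ^ p - h = sc a"
begin

abbreviation cas :: 'a where "cas \<equiv> casimir e f h"

lemma bracket_he: "h * e - e * h = 2 * e"
  and bracket_hf: "h * f - f * h = - (2 * f)"
  and bracket_ef: "e * f - f * e = h"
  using pbw unfolding sl2_pbw_algebra_def by blast+

lemma reorder_ef: "e * f = f * e + h"
  and reorder_eh: "e * h = h * e - (e + e)"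
  and reorder_hf: "h * f = f * h - (f + f)"
  using bracket_he bracket_hf bracket_ef by (simp_all add: algebra_simps mult_2)

lemma reorder_ef_left: "e * (f * z) = f * (e * z) + h * z"
  and reorder_eh_left: "e * (h * z) = h * (e * z) - (e * z + e * z)"
  and reorder_hf_left: "h * (f * z) = f * (h * z) - (f * z + f * z)"
  by (simp_all add: mult.assoc[symmetric] reorder_ef reorder_eh reorder_hf
      distrib_right left_diff_distrib)

text \<open>Rewriting to the PBW order \<open>f < h < e\<close>.\<close>
lemmas reorder = mult.assoc distrib_left distrib_right left_diff_distrib right_diff_distrib
  reorder_ef reorder_eh reorder_hf reorder_ef_left reorder_eh_left reorder_hf_left
  mult_minus_left mult_minus_right

lemma casimir_reordered: "cas = (h + 1) * (h + 1) + (f * e + f * e + f * e + f * e)"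
  unfolding casimir_def power2_eq_square mult.assoc mult_4 by (simp add: reorder algebra_simps)

lemma casimir_commute_e: "cas * e = e * cas"
  and casimir_commute_f: "cas * f = f * cas"
  and casimir_commute_h: "cas * h = h * cas"
  unfolding casimir_reordered by (simp_all add: reorder algebra_simps)

definition pbw_comb :: "(nat \<Rightarrow> nat \<Rightarrow> nat \<Rightarrow> 'k) \<Rightarrow> 'a" where
  "pbw_comb cf = (\<Sum>i<p. \<Sum>j<p. \<Sum>l<p. sc (cf i j l) * (f ^ i * h ^ j * e ^ l))"

lemma pbw_span: "\<exists>cf. x = pbw_comb cf"
  using pbw unfolding sl2_pbw_algebra_def pbw_comb_def by blast

lemma pbw_comb_diff: "pbw_comb cf1 - pbw_comb cf2 = pbw_comb (\<lambda>i j l. cf1 i j l - cf2 i j l)"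
  unfolding pbw_comb_def by (simp add: sc_diff left_diff_distrib sum_subtractf)

lemma pbw_comb_unique:
  "pbw_comb cf1 = pbw_comb cf2 \<Longrightarrow> i < p \<Longrightarrow> j < p \<Longrightarrow> l < p \<Longrightarrow> cf1 i j l = cf2 i j l"
proof -
  assume "pbw_comb cf1 = pbw_comb cf2" "i < p" "j < p" "l < p"
  moreover have "pbw_comb cf = 0 \<Longrightarrow> \<forall>i<p. \<forall>j<p. \<forall>l<p. cf i j l = 0" for cf
    using pbw unfolding sl2_pbw_algebra_def pbw_comb_def by blast
  ultimately show ?thesis using pbw_comb_diff[of cf1 cf2] by fastforce
qed

lemma casimir_central: "central cas"
  unfolding central_def
proof
  fix x
  have "cas * (f ^ i * h ^ j * e ^ l) = (f ^ i * h ^ j * e ^ l) * cas" for i j l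
  proof -
    have "cas * f ^ i = f ^ i * cas" "cas * h ^ j = h ^ j * cas" "cas * e ^ l = e ^ l * cas"
      using power_commuting_commutes casimir_commute_e casimir_commute_f casimir_commute_h
      by metis+
    then show ?thesis by (simp add: mult.assoc[symmetric]) (simp add: mult.assoc)
  qed
  moreover obtain cf where "x = pbw_comb cf" using pbw_span by blast
  ultimately show "cas * x = x * cas"
    unfolding pbw_comb_def
    by (simp add: sum_distrib_left sum_distrib_right sc_left_commute mult.assoc)
qed

lemma e_h_shift: "e * h = (h - sc 2) * e"
  using reorder_eh by (simp add: algebra_simps mult_2)

lemma f_h_shift: "f * h = (h - sc (- 2)) * f"
  using reorder_hf by (simp add: algebra_simps mult_2 sc_minus)

lemma e_power_peval: "e ^ n * peval sc q h = peval sc q (h - sc (of_nat n * 2)) * e ^ n"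
  by (rule peval_intertwine[OF power_shift_commute[OF e_h_shift]])

lemma prime_CHAR: "prime CHAR('k)"
  using prime_p CHAR_eq by simp

lemma of_nat_p_eq_0: "(of_nat p :: 'k) = 0"
  using of_nat_CHAR CHAR_eq by metis

lemma of_nat_eq_iff_less_p: "i < p \<Longrightarrow> j < p \<Longrightarrow> (of_nat i :: 'k) = of_nat j \<longleftrightarrow> i = j"
  using of_nat_eq_iff_less_CHAR CHAR_eq by metis

lemma of_nat_neq_0: "0 < n \<Longrightarrow> n < p \<Longrightarrow> (of_nat n :: 'k) \<noteq> 0"
  using of_nat_eq_iff_less_p[of n 0] by simp

lemma two_neq_0: "(2 :: 'k) \<noteq> 0"
  using of_nat_neq_0[of 2] p_gt_2 by simp

definition h_poly :: "'k poly" where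
  "h_poly = monom 1 p + [:- a, - 1:]"

definition weights :: "'k set" where
  "weights = {s. s ^ p - s = a}"

lemma poly_h_poly: "poly h_poly s = s ^ p - s - a"
  by (simp add: h_poly_def poly_monom)

lemma degree_h_poly: "degree h_poly = p"
  unfolding h_poly_def using p_gt_2 by (subst degree_add_eq_left) (auto simp: degree_monom_eq)

lemma peval_h_poly: "peval sc h_poly h = 0"
  using h_power_p by (simp add: h_poly_def peval_add peval_monom peval_pCons sc_minus algebra_simps)

lemma pderiv_h_poly: "pderiv h_poly = - 1"
  unfolding h_poly_def by (simp add: pderiv_add pderiv_monom of_nat_p_eq_0 pderiv_pCons one_pCons)

lemma weights_iff_root: "s \<in> weights \<longleftrightarrow> poly h_poly s = 0"
  by (simp add: weights_def poly_h_poly)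

lemma weights_bij:
  "r \<in> weights \<Longrightarrow> (of_nat k :: 'k) \<noteq> 0 \<Longrightarrow> bij_betw (\<lambda>n. r + of_nat (k * n)) {..<p} weights"
  using artin_schreier_roots_bij[OF prime_CHAR, of k r a] by (simp add: CHAR_eq weights_def)

lemma weights_nonempty: "\<exists>r. r \<in> weights"
  using k_alg_closed degree_h_poly p_gt_2 unfolding alg_closed_def weights_iff_root by auto

lemma finite_weights: "finite weights" and card_weights: "card weights = p"
proof -
  obtain r where "r \<in> weights" using weights_nonempty by blast
  from weights_bij[OF this, of 1] show "finite weights" "card weights = p"
    by (auto simp: bij_betw_def card_image dest: sym)
qed

lemma weights_a_eq_0: "a = 0 \<Longrightarrow> weights = of_nat ` {..<p}"
proof -
  assume "a = 0"
  then have "0 \<in> weights" unfolding weights_def using p_gt_2 by simp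
  from weights_bij[OF this, of 1] show ?thesis by (simp add: bij_betw_def)
qed

lemma plus_one_in_weights_iff: "s + 1 \<in> weights \<longleftrightarrow> s \<in> weights"
  by (simp add: weights_def freshmans_dream[OF prime_CHAR CHAR_eq[symmetric]])

lemma uminus_in_weights: "s \<in> weights \<Longrightarrow> - s \<in> weights \<Longrightarrow> a = 0"
proof -
  assume "s \<in> weights" "- s \<in> weights"
  then have "s ^ p - s = a" "(- s) ^ p - (- s) = a" unfolding weights_def by simp_all
  moreover have "(- s) ^ p - (- s) = - (s ^ p - s)"
    using minus_power_prime_CHAR[OF CHAR_eq[symmetric] prime_p, of s] by simp
  ultimately have "2 * a = 0" by (metis mult_2 add.right_inverse)
  then show "a = 0" using two_neq_0 by simp
qed

text \<open>Up to sign, the Lagrange interpolation polynomials at the roots of \<open>h_poly\<close>; evaluated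
  at \<open>h\<close> they give the decomposition of \<open>1\<close> into weight space projections.\<close>
definition weight_poly :: "'k \<Rightarrow> 'k poly" where
  "weight_poly s = - (h_poly div [:- s, 1:])"

definition weight_idem :: "'k \<Rightarrow> 'a" where
  "weight_idem s = peval sc (weight_poly s) h"

lemma h_poly_factor: "s \<in> weights \<Longrightarrow> h_poly = - ([:- s, 1:] * weight_poly s)"
  unfolding weight_poly_def weights_iff_root by (simp add: poly_eq_0_iff_dvd del: mult_pCons_left)

lemma degree_weight_poly: "s \<in> weights \<Longrightarrow> degree (weight_poly s) = p - 1"
proof -
  assume s: "s \<in> weights"
  have "weight_poly s \<noteq> 0" using h_poly_factor[OF s] degree_h_poly p_gt_2 by auto
  then have "degree h_poly = 1 + degree (weight_poly s)"
    by (subst h_poly_factor[OF s]) (simp add: degree_mult_eq del: mult_pCons_left)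
  then show ?thesis using degree_h_poly by simp
qed

lemma sum_weight_idem: "(\<Sum>s\<in>weights. weight_idem s) = 1"
proof -
  have "(\<Sum>s\<in>weights. h_poly div [:- s, 1:]) = pderiv h_poly"
    using finite_weights card_weights degree_h_poly
    by (intro sum_div_linear_factors_eq_pderiv) (auto simp: weights_iff_root)
  then show ?thesis
    by (simp add: weight_idem_def weight_poly_def peval_sum[symmetric] pderiv_h_poly sum_negf)
qed

lemma h_weight_idem: "s \<in> weights \<Longrightarrow> h * weight_idem s = sc s * weight_idem s"
proof -
  assume s: "s \<in> weights"
  have "0 = peval sc h_poly h" using peval_h_poly by simp
  also have "\<dots> = - ((sc (- s) + h) * weight_idem s)"
    by (subst h_poly_factor[OF s]) (simp only: peval_minus peval_mult peval_linear weight_idem_def)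
  finally show ?thesis by (simp add: sc_minus algebra_simps)
qed

subsection \<open>Highest weight vectors and the Casimir element\<close>

lemma highest_weight_vector_from_poly:
  assumes M: "left_ideal M" and w: "w \<notin> M" "e * w \<in> M"
  shows "Q \<noteq> 0 \<Longrightarrow> peval sc Q h * w \<in> M \<Longrightarrow>
    \<exists>r u. poly Q r = 0 \<and> u \<notin> M \<and> e * u \<in> M \<and> h * u - sc r * u \<in> M"
proof (induction "degree Q" arbitrary: Q rule: less_induct)
  case (less Q)
  show ?case
  proof (cases "degree Q = 0")
    case True
    then obtain c where "Q = [:c:]" by (elim degree_eq_zeroE)
    then have "c \<noteq> 0" "sc c * w \<in> M" using less.prems by auto
    then show ?thesis using w M left_ideal_sc_cancel by blast
  next
    case False
    then obtain r where r: "poly Q r = 0" using k_alg_closed unfolding alg_closed_def by auto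
    then obtain Q1 where Q1: "Q = [:- r, 1:] * Q1" by (metis dvdE poly_eq_0_iff_dvd)
    then have "Q1 \<noteq> 0" using less.prems by auto
    then have deg: "degree Q1 < degree Q"
      unfolding Q1 by (simp add: degree_mult_eq del: mult_pCons_left)
    show ?thesis
    proof (cases "peval sc Q1 h * w \<in> M")
      case True
      from less.hyps[OF deg \<open>Q1 \<noteq> 0\<close> True] show ?thesis
        unfolding Q1 by auto
    next
      case False
      let ?u = "peval sc Q1 h * w"
      have "h * ?u - sc r * ?u = peval sc Q h * w"
        unfolding Q1 peval_mult by (simp add: sc_minus algebra_simps)
      moreover have "e * ?u = peval sc Q1 (h - sc 2) * (e * w)"
        using e_power_peval[of 1 Q1] by (simp add: mult.assoc[symmetric])
      ultimately show ?thesis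
        using False less.prems(2) w(2) M left_ideal_mult r by metis
    qed
  qed
qed

lemma exists_highest_weight_vector:
  assumes "max_left_ideal M"
  obtains u r where "u \<notin> M" "e * u \<in> M" "h * u - sc r * u \<in> M" "r \<in> weights"
proof -
  have M: "left_ideal M" "1 \<notin> M"
    using assms max_left_ideal_imp_left_ideal max_left_ideal_one by auto
  define n where "n = (LEAST n. e ^ n \<in> M)"
  have "e ^ p \<in> M" using e_power_p left_ideal_0[OF M(1)] by simp
  then have "e ^ n \<in> M" unfolding n_def by (rule LeastI)
  moreover from this have "n \<noteq> 0" using M(2) by (metis power_0)
  ultimately have "e ^ (n - 1) \<notin> M" "e * e ^ (n - 1) \<in> M"
    using not_less_Least[of "n - 1" "\<lambda>n. e ^ n \<in> M"]
    by (simp_all add: n_def flip: power_Suc)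
  moreover have "h_poly \<noteq> 0" using degree_h_poly p_gt_2 by auto
  moreover have "peval sc h_poly h * e ^ (n - 1) \<in> M"
    using peval_h_poly left_ideal_0[OF M(1)] by simp
  ultimately show ?thesis
    using highest_weight_vector_from_poly[OF M(1)] that weights_iff_root by metis
qed

lemma casimir_weight_mod:
  assumes J: "left_ideal J" and u: "h * u - sc r * u \<in> J"
  shows "cas * u - sc ((r + 1) ^ 2) * u - 4 * (f * (e * u)) \<in> J"
proof -
  let ?d = "(h + 1) * u - sc (r + 1) * u"
  have "?d \<in> J" using u by (simp add: sc_add algebra_simps)
  then have "(h + 1) * ?d + sc (r + 1) * ?d \<in> J"
    using J left_ideal_mult left_ideal_add by blast
  moreover have "(h + 1) * (sc (r + 1) * u) = sc (r + 1) * ((h + 1) * u)"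
    by (rule sc_left_commute)
  moreover have "sc (r + 1) * (sc (r + 1) * u) = sc ((r + 1) ^ 2) * u"
    by (simp add: sc_sc_mult power2_eq_square)
  moreover have "cas * u = (h + 1) * ((h + 1) * u) + 4 * (f * (e * u))"
    unfolding casimir_reordered mult_4 by (simp only: distrib_right mult.assoc)
  ultimately show ?thesis by (simp add: algebra_simps)
qed

lemma casimir_weight_vector:
  assumes "h * v = sc r * v"
  shows "cas * v - sc ((r + 1) ^ 2) * v = 4 * (f * (e * v))"
proof -
  have "left_ideal {0::'a}" by (simp add: left_ideal_def)
  with casimir_weight_mod[of "{0}" v r] assms show ?thesis by simp
qed

lemma casimir_scalar_highest_weight:
  assumes M: "left_ideal M" and u: "u \<notin> M" "e * u \<in> M" "h * u - sc r * u \<in> M"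
    and c: "cas - sc \<alpha> \<in> M"
  shows "\<alpha> = (r + 1) ^ 2"
proof (rule ccontr)
  assume "\<alpha> \<noteq> (r + 1) ^ 2"
  have "4 * (f * (e * u)) \<in> M"
    using u(2) M left_ideal_mult[of M "e * u" "4 * f"] by (simp add: mult.assoc)
  then have "cas * u - sc ((r + 1) ^ 2) * u - 4 * (f * (e * u)) + 4 * (f * (e * u)) \<in> M"
    using casimir_weight_mod[OF M u(3)] M left_ideal_add by blast
  then have lowered: "cas * u - sc ((r + 1) ^ 2) * u \<in> M" by (simp only: diff_add_cancel)
  have "u * cas = cas * u" using casimir_central by (simp add: central_def)
  then have "u * (cas - sc \<alpha>) = cas * u - sc \<alpha> * u"
    by (simp add: right_diff_distrib sc_commute[of \<alpha> u])
  then have "cas * u - sc \<alpha> * u \<in> M" using c M left_ideal_mult by metis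
  from left_ideal_diff[OF M this lowered]
  have "(cas * u - sc \<alpha> * u) - (cas * u - sc ((r + 1) ^ 2) * u) \<in> M" .
  then have "sc ((r + 1) ^ 2 - \<alpha>) * u \<in> M"
    by (simp add: sc_diff left_diff_distrib)
  moreover have "(r + 1) ^ 2 - \<alpha> \<noteq> 0" using \<open>\<alpha> \<noteq> (r + 1) ^ 2\<close> by simp
  ultimately show False using left_ideal_sc_cancel[OF M] u(1) by blast
qed

definition casimir_poly :: "'k poly" where
  "casimir_poly = (\<Prod>s\<in>weights. [:- (s ^ 2), 1:])"

text \<open>For any weight \<open>r\<close>, the numbers \<open>r + 1 + 2m\<close> (\<open>m < p\<close>) run once through all weights.\<close>
lemma casimir_poly_from_weight:
  assumes "r \<in> weights"
  shows "casimir_poly = (\<Prod>m<p. [:- ((r + 1 + 2 * of_nat m) ^ 2), 1:])"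
proof -
  have "r + 1 \<in> weights" using assms plus_one_in_weights_iff by simp
  from weights_bij[OF this, of 2] two_neq_0
  have "bij_betw (\<lambda>m. r + 1 + of_nat (2 * m)) {..<p} weights" by simp
  from prod.reindex_bij_betw[OF this, of "\<lambda>s. [:- (s ^ 2), 1:]"] show ?thesis
    by (simp add: casimir_poly_def)
qed

text \<open>The factor \<open>cas - (r + 1 + 2k)\<^sup>2\<close> maps \<open>e\<^sup>k y\<close> into \<open>A e\<^bsup>k+1\<^esup> y\<close>, and \<open>e\<^sup>p = 0\<close>.\<close>
lemma casimir_poly_kills_weight_vector:
  assumes r: "r \<in> weights" and y: "h * y = sc r * y"
  shows "peval sc casimir_poly cas * y = 0"
proof -
  have "\<exists>z. peval sc (\<Prod>m<k. [:- ((r + 1 + 2 * of_nat m) ^ 2), 1:]) cas * y = z * (e ^ k * y)" for k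
  proof (induction k)
    case 0
    show ?case by (intro exI[of _ 1]) simp
  next
    case (Suc k)
    then obtain z where z: "peval sc (\<Prod>m<k. [:- ((r + 1 + 2 * of_nat m) ^ 2), 1:]) cas * y
        = z * (e ^ k * y)" by blast
    let ?P = "peval sc (\<Prod>m<k. [:- ((r + 1 + 2 * of_nat m) ^ 2), 1:]) cas"
    let ?\<beta> = "(r + 1 + 2 * of_nat k) ^ 2"
    have "h * (e ^ k * y) = sc (r + of_nat k * 2) * (e ^ k * y)"
      by (rule weight_vector_shift[OF e_h_shift y])
    then have "cas * (e ^ k * y) - sc ((r + of_nat k * 2 + 1) ^ 2) * (e ^ k * y)
        = 4 * (f * (e * (e ^ k * y)))"
      by (rule casimir_weight_vector)
    moreover have "r + of_nat k * 2 + 1 = r + 1 + 2 * of_nat k" by simp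
    ultimately have step: "(cas - sc ?\<beta>) * (e ^ k * y) = 4 * (f * (e * (e ^ k * y)))"
      by (simp only: left_diff_distrib)
    have comm: "(cas - sc ?\<beta>) * x = x * (cas - sc ?\<beta>)" for x
      using casimir_central by (simp add: central_def left_diff_distrib right_diff_distrib sc_commute)
    have "peval sc (\<Prod>m<Suc k. [:- ((r + 1 + 2 * of_nat m) ^ 2), 1:]) cas * y
        = ?P * (cas - sc ?\<beta>) * y"
      by (simp only: prod.lessThan_Suc peval_linear_factor)
    also have "\<dots> = (cas - sc ?\<beta>) * (?P * y)"
      by (simp only: comm[of ?P, symmetric]) (simp only: mult.assoc)
    also have "\<dots> = z * ((cas - sc ?\<beta>) * (e ^ k * y))"
      by (simp only: z mult.assoc[symmetric] comm[of z])
    also have "\<dots> = (z * 4 * f) * (e ^ Suc k * y)" by (simp add: step mult.assoc)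
    finally show ?case by blast
  qed
  from this[of p] show ?thesis
    using e_power_p by (auto simp: casimir_poly_from_weight[OF r])
qed

lemma peval_casimir_poly: "peval sc casimir_poly cas = 0"
proof -
  have "peval sc casimir_poly cas = (\<Sum>s\<in>weights. peval sc casimir_poly cas * weight_idem s)"
    by (simp add: sum_distrib_left[symmetric] sum_weight_idem)
  also have "\<dots> = 0"
    by (rule sum.neutral) (simp add: casimir_poly_kills_weight_vector h_weight_idem)
  finally show ?thesis .
qed

lemma card_square_roots_le:
  assumes "t \<in> weights"
  shows "card {s\<in>weights. s ^ 2 = t ^ 2} \<le> 2"
    and "a \<noteq> 0 \<or> t = 0 \<Longrightarrow> card {s\<in>weights. s ^ 2 = t ^ 2} \<le> 1"
proof -
  have sub: "{s\<in>weights. s ^ 2 = t ^ 2} \<subseteq> {t, - t}" by (auto simp: power2_eq_iff)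
  then show "card {s\<in>weights. s ^ 2 = t ^ 2} \<le> 2"
    using card_mono[OF _ sub] by (simp add: card_insert_if split: if_splits)
  assume "a \<noteq> 0 \<or> t = 0"
  then have "{s\<in>weights. s ^ 2 = t ^ 2} \<subseteq> {t}"
    using sub uminus_in_weights[OF assms] by auto
  then show "card {s\<in>weights. s ^ 2 = t ^ 2} \<le> 1"
    using card_mono[of "{t}"] by fastforce
qed

lemma block_highest_weight:
  assumes \<pi>: "prim_central_idem \<pi>" and \<alpha>: "block_scalar sc cas \<pi> \<alpha>"
  obtains M u r where "max_left_ideal M" "1 - \<pi> \<in> M" "cas - sc \<alpha> \<in> M"
    "u \<notin> M" "e * u \<in> M" "h * u - sc r * u \<in> M" "r \<in> weights" "\<alpha> = (r + 1) ^ 2"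
proof -
  obtain M where M: "max_left_ideal M" "1 - \<pi> \<in> M" using exists_block_max_left_ideal[OF \<pi>] .
  then have c: "cas - sc \<alpha> \<in> M" using \<alpha> by (simp add: block_scalar_def)
  obtain u r where u: "u \<notin> M" "e * u \<in> M" "h * u - sc r * u \<in> M" "r \<in> weights"
    using exists_highest_weight_vector[OF M(1)] .
  have "\<alpha> = (r + 1) ^ 2"
    using casimir_scalar_highest_weight[OF max_left_ideal_imp_left_ideal[OF M(1)] u(1-3) c] .
  with M c u that show ?thesis by blast
qed

lemma block_casimir_square:
  assumes "prim_central_idem \<pi>" "block_scalar sc cas \<pi> \<alpha>"
  obtains t where "t \<in> weights" "\<alpha> = t ^ 2"
  using block_highest_weight[OF assms] plus_one_in_weights_iff by metis

lemma block_casimir_annihilated: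
  assumes \<pi>: "prim_central_idem \<pi>" and \<alpha>: "block_scalar sc cas \<pi> \<alpha>"
    and k: "card {s\<in>weights. s ^ 2 = \<alpha>} \<le> k"
  shows "\<pi> * peval sc ([:- \<alpha>, 1:] ^ k) cas = 0"
proof -
  obtain M where M: "max_left_ideal M" "1 - \<pi> \<in> M" "cas - sc \<alpha> \<in> M"
    using block_highest_weight[OF \<pi> \<alpha>] by metis
  let ?K = "card {s\<in>weights. s ^ 2 = \<alpha>}"
  have "\<pi> * peval sc ([:- \<alpha>, 1:] ^ ?K) cas = 0"
    using M max_left_ideal_imp_left_ideal max_left_ideal_one peval_casimir_poly
      prod_linear_factors_split[OF finite_weights, of "\<lambda>s. s ^ 2" \<alpha>]
    by (intro prim_central_idem_annihilates_power[OF casimir_central \<pi>])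
      (auto simp: casimir_poly_def)
  then have "\<pi> * peval sc ([:- \<alpha>, 1:] ^ ?K) cas * peval sc ([:- \<alpha>, 1:] ^ (k - ?K)) cas = 0"
    by simp
  with k show ?thesis by (simp add: mult.assoc peval_mult[symmetric] power_add[symmetric])
qed

subsection \<open>Baby Verma modules\<close>

lemma e_power_eq_0: "p \<le> n \<Longrightarrow> e ^ n = 0"
  using e_power_p by (metis le_add_diff_inverse mult_zero_left power_add)

lemma pbw_comb_mult_e_power:
  "pbw_comb cf * e ^ L = pbw_comb (\<lambda>i j l. if L \<le> l then cf i j (l - L) else 0)"
proof -
  have "(\<Sum>l<p. sc (c l) * (B * e ^ l)) * e ^ L
      = (\<Sum>l<p. sc (if L \<le> l then c (l - L) else 0) * (B * e ^ l))" for c B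
  proof -
    have "(\<Sum>l<p. sc (c l) * (B * e ^ l)) * e ^ L = (\<Sum>l<p. sc (c l) * (B * e ^ (l + L)))"
      by (simp add: sum_distrib_right mult.assoc power_add)
    also have "\<dots> = (\<Sum>l\<in>{0..<p - L}. sc (c l) * (B * e ^ (l + L)))"
      by (rule sum.mono_neutral_right) (auto simp: e_power_eq_0)
    also have "\<dots> = (\<Sum>l\<in>{L..<p}. sc (c (l - L)) * (B * e ^ l))"
      by (simp add: sum.atLeastLessThan_shift_0[of _ L p] add.commute)
    also have "\<dots> = (\<Sum>l<p. sc (if L \<le> l then c (l - L) else 0) * (B * e ^ l))"
      by (rule sum.mono_neutral_cong_left) auto
    finally show ?thesis .
  qed
  then show ?thesis
    unfolding pbw_comb_def by (simp add: sum_distrib_right)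
qed

lemma pbw_comb_single_e_power:
  assumes "m < p" "degree q < p"
  shows "(\<Sum>i<p. sc (b i) * (f ^ i * peval sc q h * e ^ m))
    = pbw_comb (\<lambda>i j l. if l = m then b i * coeff q j else 0)"
proof -
  have "f ^ i * peval sc q h * e ^ m = (\<Sum>j<p. sc (coeff q j) * (f ^ i * h ^ j * e ^ m))" for i
    unfolding peval_eq_sum_lessThan[OF assms(2)]
    by (simp add: sum_distrib_left sum_distrib_right sc_left_commute mult.assoc)
  then have "sc (b i) * (f ^ i * peval sc q h * e ^ m)
      = (\<Sum>j<p. sc (b i * coeff q j) * (f ^ i * h ^ j * e ^ m))" for i
    by (simp add: sum_distrib_left sc_sc_mult)
  moreover have "(\<Sum>l<p. sc (if l = m then c else 0) * (B * e ^ l)) = sc c * (B * e ^ m)" for c B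
    using assms(1) by (simp add: sum_sc_delta)
  ultimately show ?thesis unfolding pbw_comb_def by simp
qed

text \<open>Compare the PBW coefficients at \<open>f\<^sup>i h\<^bsup>degree q\<^esup> e\<^sup>m\<close>: no element of \<open>A e\<^bsup>m+1\<^esup>\<close> has
  a monomial with \<open>e\<close>-exponent \<open>m\<close>.\<close>
lemma e_power_leading_independent:
  assumes m: "m < p" and q: "q \<noteq> 0" "degree q < p"
    and eq: "(\<Sum>i<p. sc (b i) * (f ^ i * peval sc q h * e ^ m)) = x * e ^ Suc m"
  shows "\<forall>i<p. b i = 0"
proof (intro allI impI)
  fix i assume "i < p"
  obtain cf where "x = pbw_comb cf" using pbw_span by blast
  have "pbw_comb (\<lambda>i j l. if l = m then b i * coeff q j else 0) = x * e ^ Suc m"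
    using eq by (simp only: pbw_comb_single_e_power[OF m q(2)])
  also have "\<dots> = pbw_comb (\<lambda>i j l. if Suc m \<le> l then cf i j (l - Suc m) else 0)"
    by (simp only: \<open>x = pbw_comb cf\<close> pbw_comb_mult_e_power)
  finally have "pbw_comb (\<lambda>i j l. if l = m then b i * coeff q j else 0)
      = pbw_comb (\<lambda>i j l. if Suc m \<le> l then cf i j (l - Suc m) else 0)" .
  from pbw_comb_unique[OF this \<open>i < p\<close> q(2) m] have "b i * lead_coeff q = 0" by simp
  with q(1) show "b i = 0" by simp
qed

text \<open>\<open>A v / A e v\<close> is a baby Verma module, with basis \<open>f\<^sup>i v\<close> (\<open>i < p\<close>).\<close>
lemma verma_f_powers_independent:
  assumes w: "w \<in> weights" and m: "m < p"
    and b: "(\<Sum>i<p. sc (b i) * (f ^ i * (e ^ m * weight_idem w)))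
      \<in> range (\<lambda>x. x * (e * (e ^ m * weight_idem w)))"
  shows "\<forall>i<p. b i = 0"
proof -
  let ?Q = "\<lambda>n. pcompose (weight_poly w) [:- (of_nat n * 2), 1:]"
  have shift: "e ^ n * weight_idem w = peval sc (?Q n) h * e ^ n" for n
    by (simp add: weight_idem_def e_power_peval peval_pcompose sc_minus)
  have "degree (?Q m) = p - 1"
    by (simp add: degree_pcompose degree_weight_poly[OF w])
  then have Q: "?Q m \<noteq> 0" "degree (?Q m) < p" using p_gt_2 by auto
  obtain x where x: "(\<Sum>i<p. sc (b i) * (f ^ i * (e ^ m * weight_idem w)))
      = x * (e * (e ^ m * weight_idem w))" using b by blast
  have "(\<Sum>i<p. sc (b i) * (f ^ i * peval sc (?Q m) h * e ^ m))
      = (\<Sum>i<p. sc (b i) * (f ^ i * (e ^ m * weight_idem w)))"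
    by (simp only: shift mult.assoc)
  also have "\<dots> = x * (e * (e ^ m * weight_idem w))" by (rule x)
  also have "e * (e ^ m * weight_idem w) = e ^ Suc m * weight_idem w" by (simp add: mult.assoc)
  also have "x * (e ^ Suc m * weight_idem w) = (x * peval sc (?Q (Suc m)) h) * e ^ Suc m"
    by (simp only: shift mult.assoc)
  finally show ?thesis by (rule e_power_leading_independent[OF m Q])
qed

lemma h_power_mod:
  assumes J: "left_ideal J" and w: "h * w - sc r * w \<in> J"
  shows "h ^ j * w - sc (r ^ j) * w \<in> J"
proof (induction j)
  case 0
  show ?case using left_ideal_0[OF J] by simp
next
  case (Suc j)
  have "h * (sc (r ^ j) * w) = sc (r ^ j) * (h * w)" by (rule sc_left_commute)
  moreover have "sc (r ^ j) * (sc r * w) = sc (r ^ Suc j) * w" by (simp add: sc_sc_mult mult.commute)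
  ultimately have "h ^ Suc j * w - sc (r ^ Suc j) * w
      = h * (h ^ j * w - sc (r ^ j) * w) + sc (r ^ j) * (h * w - sc r * w)"
    by (simp add: right_diff_distrib mult.assoc)
  also have "\<dots> \<in> J" using Suc w J left_ideal_add left_ideal_mult by blast
  finally show ?case .
qed

text \<open>On a highest weight vector of weight \<open>r\<close> modulo \<open>J\<close>, the PBW monomial \<open>f\<^sup>i h\<^sup>j e\<^sup>l\<close> acts as
  \<open>r\<^sup>j f\<^sup>i\<close> if \<open>l = 0\<close> and as zero otherwise.\<close>
lemma pbw_comb_on_highest_weight:
  assumes J: "left_ideal J" and w: "e * w \<in> J" "h * w - sc r * w \<in> J"
  shows "pbw_comb cf * w - (\<Sum>i<p. sc (\<Sum>j<p. cf i j 0 * r ^ j) * (f ^ i * w)) \<in> J"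
proof -
  define T where "T i j l = sc (cf i j l) * (f ^ i * h ^ j * e ^ l) * w
     - (if l = 0 then sc (cf i j 0 * r ^ j) * (f ^ i * w) else 0)" for i j l
  have "T i j l \<in> J" for i j l
  proof (cases l)
    case 0
    have "f ^ i * (sc (r ^ j) * w) = sc (r ^ j) * (f ^ i * w)" by (rule sc_left_commute)
    then have "T i j l = sc (cf i j 0) * (f ^ i * (h ^ j * w - sc (r ^ j) * w))"
      unfolding T_def using 0 by (simp add: right_diff_distrib mult.assoc sc_sc_mult)
    then show ?thesis using h_power_mod[OF J w(2)] J left_ideal_mult by metis
  next
    case (Suc l')
    have "T i j l = (sc (cf i j l) * (f ^ i * h ^ j * e ^ l')) * (e * w)"
      unfolding T_def using Suc by (simp del: power_Suc add: mult.assoc power_Suc2)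
    then show ?thesis using w(1) J left_ideal_mult by metis
  qed
  then have "(\<Sum>i<p. \<Sum>j<p. \<Sum>l<p. T i j l) \<in> J" using J by (intro left_ideal_sum)
  moreover have "(\<Sum>i<p. \<Sum>j<p. \<Sum>l<p. T i j l)
      = pbw_comb cf * w - (\<Sum>i<p. sc (\<Sum>j<p. cf i j 0 * r ^ j) * (f ^ i * w))"
    using p_gt_2
    by (simp add: T_def pbw_comb_def sum_subtractf sum_distrib_right sc_sum sum.delta)
  ultimately show ?thesis by simp
qed

lemma weight_sum_f_powers:
  assumes v: "h * v = sc r * v"
  shows "h * (\<Sum>i<p. sc (b i) * (f ^ i * v)) - sc r * (\<Sum>i<p. sc (b i) * (f ^ i * v))
    = - (\<Sum>i<p. sc (b i * (2 * of_nat i)) * (f ^ i * v))"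
proof -
  have "h * (sc c * (f ^ i * v)) - sc r * (sc c * (f ^ i * v)) = - (sc (c * (2 * of_nat i)) * (f ^ i * v))"
    for c i
  proof -
    have "h * (sc c * (f ^ i * v)) = sc c * (h * (f ^ i * v))" by (rule sc_left_commute)
    also have "h * (f ^ i * v) = sc (r + of_nat i * - 2) * (f ^ i * v)"
      by (rule weight_vector_shift[OF f_h_shift v])
    also have "sc c * (sc (r + of_nat i * - 2) * (f ^ i * v)) = sc (c * (r + of_nat i * - 2)) * (f ^ i * v)"
      by (rule sc_sc_mult)
    finally have "h * (sc c * (f ^ i * v)) = sc (c * (r + of_nat i * - 2)) * (f ^ i * v)" .
    moreover have "sc r * (sc c * (f ^ i * v)) = sc (r * c) * (f ^ i * v)" by (rule sc_sc_mult)
    ultimately have "h * (sc c * (f ^ i * v)) - sc r * (sc c * (f ^ i * v))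
        = sc (c * (r + of_nat i * - 2) - r * c) * (f ^ i * v)"
      by (simp only: sc_diff left_diff_distrib)
    also have "c * (r + of_nat i * - 2) - r * c = - (c * (2 * of_nat i))" by (simp add: algebra_simps)
    finally show ?thesis by (simp add: sc_minus)
  qed
  then show ?thesis
    by (simp add: sum_distrib_left sum_subtractf[symmetric] sum_negf)
qed

text \<open>Comparing weights: \<open>z v\<close> has weight \<open>r\<close>, while \<open>f\<^sup>i v\<close> has weight \<open>r - 2i\<close>.\<close>
lemma central_verma_coefficients:
  assumes z: "central z" and r: "r \<in> weights"
    and D: "z * weight_idem r - (\<Sum>i<p. sc (\<beta> i) * (f ^ i * weight_idem r))
      \<in> range (\<lambda>x. x * (e * weight_idem r))"
    and i: "0 < i" "i < p"
  shows "\<beta> i = 0"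
proof -
  let ?v = "weight_idem r"
  let ?J = "range (\<lambda>x. x * (e * ?v))" and ?S = "\<Sum>i<p. sc (\<beta> i) * (f ^ i * ?v)"
  have J: "left_ideal ?J" by (rule left_ideal_range_mult_right)
  have hv: "h * ?v = sc r * ?v" by (rule h_weight_idem[OF r])
  from D have "h * (z * ?v - ?S) \<in> ?J" "sc r * (z * ?v - ?S) \<in> ?J"
    by (rule left_ideal_mult[OF J])+
  then have "h * (z * ?v - ?S) - sc r * (z * ?v - ?S) \<in> ?J"
    by (rule left_ideal_diff[OF J])
  moreover have "h * (z * ?v) = sc r * (z * ?v)"
  proof -
    have "h * z = z * h" using z by (simp add: central_def)
    then have "h * (z * ?v) = z * (h * ?v)" by (simp only: mult.assoc[symmetric])
    then show ?thesis by (simp only: hv sc_left_commute)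
  qed
  moreover have "h * (z * ?v - ?S) - sc r * (z * ?v - ?S)
      = (h * (z * ?v) - sc r * (z * ?v)) - (h * ?S - sc r * ?S)"
    by (simp add: right_diff_distrib algebra_simps)
  ultimately have "(\<Sum>i<p. sc (\<beta> i * (2 * of_nat i)) * (f ^ i * ?v)) \<in> ?J"
    using weight_sum_f_powers[OF hv, of \<beta>] by simp
  then have "\<forall>i<p. \<beta> i * (2 * of_nat i) = 0"
    using verma_f_powers_independent[OF r, where m = 0 and b = "\<lambda>i. \<beta> i * (2 * of_nat i)"] p_gt_2
    by (simp del: mult_eq_0_iff)
  then show "\<beta> i = 0" using i of_nat_neq_0[OF i] two_neq_0 by auto
qed

lemma central_acts_on_highest_weight:
  assumes z: "central z" and r: "r \<in> weights"
  obtains \<beta> where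
    "\<And>M u. left_ideal M \<Longrightarrow> e * u \<in> M \<Longrightarrow> h * u - sc r * u \<in> M \<Longrightarrow> z * u - sc \<beta> * u \<in> M"
proof -
  obtain cf where cf: "z = pbw_comb cf" using pbw_span by blast
  define \<beta> where "\<beta> i = (\<Sum>j<p. cf i j 0 * r ^ j)" for i
  have action: "z * u - (\<Sum>i<p. sc (\<beta> i) * (f ^ i * u)) \<in> M"
    if "left_ideal M" "e * u \<in> M" "h * u - sc r * u \<in> M" for M u
    unfolding cf \<beta>_def using pbw_comb_on_highest_weight[OF that] .
  let ?J = "range (\<lambda>x. x * (e * weight_idem r))"
  have "left_ideal ?J" "e * weight_idem r \<in> ?J" "h * weight_idem r - sc r * weight_idem r \<in> ?J"
    using h_weight_idem[OF r] left_ideal_0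
    by (auto intro: left_ideal_range_mult_right range_eqI[of _ _ 1])
  from action[OF this] have "\<beta> i = 0" if "0 < i" "i < p" for i
    using central_verma_coefficients[OF z r _ that] by blast
  then have "(\<Sum>i<p. sc (\<beta> i) * (f ^ i * u)) = (\<Sum>i<p. sc (if i = 0 then \<beta> 0 else 0) * (f ^ i * u))"
    for u by (intro sum.cong) auto
  moreover have "(\<Sum>i<p. sc (if i = 0 then \<beta> 0 else 0) * (f ^ i * u)) = sc (\<beta> 0) * u" for u
    using p_gt_2 by (simp add: sum_sc_delta)
  ultimately show ?thesis using action that by metis
qed

lemma block_idem_on_highest_weight:
  assumes \<pi>: "central \<pi>" and M: "left_ideal M" "1 - \<pi> \<in> M"
    and u: "u \<notin> M" "e * u \<in> M" "h * u - sc r * u \<in> M" and r: "r \<in> weights"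
    and J: "left_ideal J" "e * v \<in> J" "h * v - sc r * v \<in> J"
  shows "\<pi> * v - v \<in> J"
proof -
  obtain \<beta> where \<beta>:
    "\<And>M u. left_ideal M \<Longrightarrow> e * u \<in> M \<Longrightarrow> h * u - sc r * u \<in> M \<Longrightarrow> \<pi> * u - sc \<beta> * u \<in> M"
    using central_acts_on_highest_weight[OF \<pi> r] by blast
  have "u * (1 - \<pi>) \<in> M" using left_ideal_mult[OF M] .
  then have "- (u * (1 - \<pi>)) - (\<pi> * u - sc \<beta> * u) \<in> M"
    by (intro left_ideal_diff[OF M(1)] left_ideal_minus[OF M(1)] \<beta>[OF M(1) u(2,3)])
  moreover have "u * \<pi> = \<pi> * u" using \<pi> by (simp add: central_def)
  then have "- (u * (1 - \<pi>)) - (\<pi> * u - sc \<beta> * u) = sc (\<beta> - 1) * u"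
    by (simp add: right_diff_distrib left_diff_distrib sc_diff)
  ultimately have "\<beta> = 1" using left_ideal_sc_cancel[OF M(1)] u(1) right_minus_eq by metis
  then show ?thesis using \<beta>[OF J] by simp
qed

lemma lowest_weight_f_power_e_power:
  assumes hG: "h * G = sc w * G" and cG: "cas * G = sc ((w + 1) ^ 2) * G"
  shows "f ^ Suc k * (e ^ Suc k * G) = 0"
proof -
  have "sc 4 * (f * (e * G)) = 0" using casimir_weight_vector[OF hG] cG by simp
  moreover have "(4::'k) \<noteq> 0" using no_zero_divisors[OF two_neq_0 two_neq_0] by simp
  ultimately have fe: "f * (e * G) = 0" by (simp del: sc_numeral)
  have chain: "\<exists>d. f * (e ^ Suc l * G) = sc d * (e ^ l * G)" for l
  proof (induction l)
    case 0
    show ?case using fe by (intro exI[of _ 0]) simp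
  next
    case (Suc l)
    then obtain d where d: "f * (e ^ Suc l * G) = sc d * (e ^ l * G)" by blast
    have fe_swap: "f * e = e * f - h" using reorder_ef by (simp add: algebra_simps)
    have "f * (e ^ Suc (Suc l) * G) = (f * e) * (e ^ Suc l * G)"
      by (simp only: power_Suc mult.assoc)
    also have "\<dots> = e * (f * (e ^ Suc l * G)) - h * (e ^ Suc l * G)"
      by (simp only: fe_swap left_diff_distrib mult.assoc)
    also have "e * (f * (e ^ Suc l * G)) = sc d * (e ^ Suc l * G)"
      by (simp only: d sc_left_commute) (simp only: power_Suc mult.assoc)
    also have "h * (e ^ Suc l * G) = sc (w + of_nat (Suc l) * 2) * (e ^ Suc l * G)"
      by (rule weight_vector_shift[OF e_h_shift hG])
    finally show ?case by (metis sc_diff left_diff_distrib)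
  qed
  show ?thesis
  proof (induction k)
    case (Suc k)
    obtain d where "f * (e ^ Suc (Suc k) * G) = sc d * (e ^ Suc k * G)" using chain by blast
    then have "f ^ Suc (Suc k) * (e ^ Suc (Suc k) * G) = sc d * (f ^ Suc k * (e ^ Suc k * G))"
      by (simp only: power_Suc2[of f "Suc k"] mult.assoc sc_left_commute)
    with Suc.IH show ?case by simp
  qed (use fe in simp)
qed

lemma block_lowering_vanishes:
  assumes \<pi>: "central \<pi>" and Z: "\<pi> * (cas - sc ((w + 1) ^ 2)) = 0" and w: "w \<in> weights"
  shows "f ^ Suc k * (e ^ Suc k * (\<pi> * weight_idem w)) = 0"
proof (rule lowest_weight_f_power_e_power)
  let ?g = "weight_idem w"
  show "h * (\<pi> * ?g) = sc w * (\<pi> * ?g)"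
    using \<pi> h_weight_idem[OF w] by (metis central_def mult.assoc sc_left_commute)
  have "cas * (\<pi> * ?g) = (\<pi> * cas) * ?g"
    using casimir_central by (simp add: central_def mult.assoc)
  also have "\<pi> * cas = \<pi> * sc ((w + 1) ^ 2)" using Z by (simp add: right_diff_distrib)
  finally show "cas * (\<pi> * ?g) = sc ((w + 1) ^ 2) * (\<pi> * ?g)"
    by (simp add: sc_commute mult.assoc)
qed

text \<open>Were \<open>\<pi> (cas - \<alpha>) = 0\<close>: with \<open>m = r + 1 \<noteq> 0\<close>, the reflected weight \<open>w = r - 2m\<close> also
  has \<open>(w + 1)\<^sup>2 = \<alpha>\<close>, so \<open>f\<^sup>m\<close> kills \<open>\<pi> v\<close> for the highest weight vector \<open>v = e\<^sup>m (weight_idem w)\<close>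
  of weight \<open>r\<close>. But \<open>\<pi>\<close> acts on \<open>v\<close> as on the simple module, i.e. as \<open>1\<close>, and \<open>f\<^sup>m v \<notin> A e v\<close>.\<close>
lemma block_casimir_not_scalar:
  assumes a: "a = 0" and \<pi>: "prim_central_idem \<pi>" "block_scalar sc cas \<pi> \<alpha>" and \<alpha>: "\<alpha> \<noteq> 0"
  shows "\<pi> * (cas - sc \<alpha>) \<noteq> 0"
proof
  assume Z: "\<pi> * (cas - sc \<alpha>) = 0"
  obtain M u r where M: "max_left_ideal M" "1 - \<pi> \<in> M" and u: "u \<notin> M" "e * u \<in> M"
    "h * u - sc r * u \<in> M" and r: "r \<in> weights" and \<alpha>_eq: "\<alpha> = (r + 1) ^ 2"
    using block_highest_weight[OF \<pi>] by metis
  have \<pi>_central: "central \<pi>" using \<pi>(1) by (simp add: prim_central_idem_def)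
  obtain m where m: "m < p" "r + 1 = of_nat m"
    using r plus_one_in_weights_iff weights_a_eq_0[OF a] by (metis imageE lessThan_iff)
  with \<alpha> \<alpha>_eq obtain m' where m': "m = Suc m'" by (cases m) auto
  define w where "w = r - of_nat m * 2"
  have "(- of_nat m :: 'k) \<in> weights"
    unfolding weights_def using a minus_power_prime_CHAR[OF CHAR_eq[symmetric] prime_p, of "of_nat m"]
    by (simp add: of_nat_power_CHAR[OF prime_CHAR, unfolded CHAR_eq])
  moreover have w1: "w + 1 = - of_nat m" using m(2) by (simp add: w_def algebra_simps)
  ultimately have w: "w \<in> weights" using plus_one_in_weights_iff by metis
  define v where "v = e ^ m * weight_idem w"
  have hv: "h * v = sc r * v"
    using weight_vector_shift[OF e_h_shift h_weight_idem[OF w], of m] by (simp add: v_def w_def)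
  have "\<pi> * (cas - sc ((w + 1) ^ 2)) = 0" using Z w1 m(2) \<alpha>_eq by simp
  from block_lowering_vanishes[OF \<pi>_central this w, of m']
  have "f ^ m * (e ^ m * (\<pi> * weight_idem w)) = 0" by (simp only: m')
  moreover have "e ^ m * \<pi> = \<pi> * e ^ m" using \<pi>_central by (simp add: central_def)
  ultimately have f\<pi>v: "f ^ m * (\<pi> * v) = 0" by (simp only: v_def mult.assoc[symmetric])
  let ?J = "range (\<lambda>x. x * (e * v))"
  have J: "left_ideal ?J" "e * v \<in> ?J" "h * v - sc r * v \<in> ?J"
    using hv left_ideal_0 by (auto intro: left_ideal_range_mult_right range_eqI[of _ _ 1])
  have "f ^ m * (\<pi> * v - v) \<in> ?J"
    using block_idem_on_highest_weight[OF \<pi>_central max_left_ideal_imp_left_ideal[OF M(1)] M(2)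
        u r J] J(1) left_ideal_mult by blast
  then have "(\<Sum>i<p. sc (if i = m then - 1 else 0) * (f ^ i * (e ^ m * weight_idem w)))
      \<in> range (\<lambda>x. x * (e * (e ^ m * weight_idem w)))"
    using f\<pi>v m(1) by (simp add: sum_sc_delta right_diff_distrib sc_minus v_def)
  from verma_f_powers_independent[OF w m(1) this] m(1) show False by auto
qed

lemma block_coinv_kernel_linear:
  assumes \<pi>: "prim_central_idem \<pi>" and \<alpha>: "block_scalar sc cas \<pi> \<alpha>"
    and card: "card {s\<in>weights. s ^ 2 = \<alpha>} \<le> 1"
  shows "coinv_kernel sc cas \<pi> = {q. [:- \<alpha>, 1:] dvd q}"
proof -
  have "\<pi> * peval sc ([:- \<alpha>, 1:] ^ Suc 0) cas = 0"
    by (rule block_casimir_annihilated[OF \<pi> \<alpha>]) (use card in simp)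
  moreover have "\<pi> * peval sc ([:- \<alpha>, 1:] ^ 0) cas \<noteq> 0"
    using \<pi> by (simp add: prim_central_idem_def)
  ultimately have "coinv_kernel sc cas \<pi> = {q. [:- \<alpha>, 1:] ^ Suc 0 dvd q}"
    by (rule coinv_kernel_eq_dvd_power[OF casimir_central])
  then show ?thesis by simp
qed

lemma block_coinv_kernel_square:
  assumes \<pi>: "prim_central_idem \<pi>" and \<alpha>: "block_scalar sc cas \<pi> \<alpha>"
    and card: "card {s\<in>weights. s ^ 2 = \<alpha>} \<le> 2" and nonzero: "\<pi> * (cas - sc \<alpha>) \<noteq> 0"
  shows "coinv_kernel sc cas \<pi> = {q. [:- \<alpha>, 1:] ^ 2 dvd q}"
proof -
  have "\<pi> * peval sc ([:- \<alpha>, 1:] ^ Suc 1) cas = 0"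
    by (rule block_casimir_annihilated[OF \<pi> \<alpha>]) (use card in simp)
  moreover have "\<pi> * peval sc ([:- \<alpha>, 1:] ^ 1) cas \<noteq> 0"
    using nonzero by (simp add: sc_minus)
  ultimately have "coinv_kernel sc cas \<pi> = {q. [:- \<alpha>, 1:] ^ Suc 1 dvd q}"
    by (rule coinv_kernel_eq_dvd_power[OF casimir_central])
  then show ?thesis by (simp only: Suc_1)
qed

end

theorem corollary4p5:
  fixes p :: nat and sc :: "'k::field \<Rightarrow> 'a::ring_1" and e f h :: 'a and t a :: 'k
  assumes "prime p" and "p > 2" and "CHAR('k) = p" and "alg_closed TYPE('k)"
    and "sl2_pbw_algebra p sc e f h"
    and "e ^ p = 0" and "f ^ p = sc t" and "h ^ p - h = sc a"
  shows
    "(a = 0 \<and> (t = 0 \<or> t = 1) \<longrightarrow>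
       (\<forall>\<pi> \<alpha>. prim_central_idem \<pi> \<and> block_scalar sc (casimir e f h) \<pi> \<alpha> \<longrightarrow>
          (\<exists>n<p. \<alpha> = of_nat n ^ 2) \<and>
          (\<alpha> \<noteq> 0 \<longrightarrow> coinv_kernel sc (casimir e f h) \<pi> = {q. [:- \<alpha>, 1:] ^ 2 dvd q}) \<and>
          (\<alpha> = 0 \<longrightarrow> coinv_kernel sc (casimir e f h) \<pi> = {q. [:0, 1:] dvd q}))) \<and>
     (t = 0 \<and> a \<noteq> 0 \<longrightarrow>
       (\<forall>\<pi> \<alpha>. prim_central_idem \<pi> \<and> block_scalar sc (casimir e f h) \<pi> \<alpha> \<longrightarrow>
          \<alpha> ^ p - 2 * \<alpha> ^ ((p + 1) div 2) + \<alpha> - a ^ 2 = 0 \<and>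
          coinv_kernel sc (casimir e f h) \<pi> = {q. [:- \<alpha>, 1:] dvd q}))"
proof -
  text \<open>The value \<open>t\<close> of \<open>f\<^sup>p\<close> plays no role: only \<open>e\<^sup>p = 0\<close> and \<open>h\<^sup>p - h = a\<close> are used.\<close>
  interpret sl2_reduced sc p e f h a
    using assms by unfold_locales (auto simp: sl2_pbw_algebra_def)
  show ?thesis
  proof (intro conjI impI allI; elim conjE)
    fix \<pi> \<alpha> assume a: "a = 0" and block: "prim_central_idem \<pi>" "block_scalar sc cas \<pi> \<alpha>"
    obtain s where s: "s \<in> weights" "\<alpha> = s ^ 2" using block_casimir_square[OF block] .
    show "\<exists>n<p. \<alpha> = of_nat n ^ 2" using s weights_a_eq_0[OF a] by auto
    show "coinv_kernel sc cas \<pi> = {q. [:- \<alpha>, 1:] ^ 2 dvd q}" if "\<alpha> \<noteq> 0"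
      using block_coinv_kernel_square[OF block _ block_casimir_not_scalar[OF a block that]]
        card_square_roots_le(1)[OF s(1)] s(2) by simp
    show "coinv_kernel sc cas \<pi> = {q. [:0, 1:] dvd q}" if "\<alpha> = 0"
      using block_coinv_kernel_linear[OF block] card_square_roots_le(2)[OF s(1)] s(2) that by simp
  next
    fix \<pi> \<alpha> assume a: "a \<noteq> 0" and block: "prim_central_idem \<pi>" "block_scalar sc cas \<pi> \<alpha>"
    obtain s where s: "s \<in> weights" "\<alpha> = s ^ 2" using block_casimir_square[OF block] .
    show "\<alpha> ^ p - 2 * \<alpha> ^ ((p + 1) div 2) + \<alpha> - a ^ 2 = 0"
      using artin_schreier_square[of p s a] s prime_odd_nat[OF prime_p p_gt_2] by (simp add: weights_def)
    show "coinv_kernel sc cas \<pi> = {q. [:- \<alpha>, 1:] dvd q}"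
      using block_coinv_kernel_linear[OF block] card_square_roots_le(2)[OF s(1)] s(2) a by simp
  qed
qed

end
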